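(* Let $X$ be a topological space. The following are equivalent: (1) $\tau_\omega=\tau_\Gamma$ on $C(X)$; (2) for every $\epsilon\in LSC(X,(0,1))$ there is a continuous $\eta:X\to(0,1)$ with $\eta(x)\le\epsilon(x)$ for every $x\in X$.
   Context: $C(X)$ is the set of continuous real-valued functions on $X$, each identified with its graph in $X\times\mathbb{R}$. The graph topology $\tau_\Gamma$ on $C(X)$ has base $\{F_G: G\text{ open in }X\times\mathbb{R}\}$ where $F_G=\{f\in C(X): f\subset G\}$. $LSC(X,(0,1))$ is the set of lower semicontinuous functions $X\to(0,1)$. The fine (Whitney) topology $\tau_\omega$ on $C(X)$ is the topology with base consisting of all sets $\{g\in C(X): |f(x)-g(x)|<\eta(x)\ \forall x\in X\}$, where $f\in C(X)$ and $\eta:X\to(0,1)$ is continuous. *)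

theory Defs
  imports "HOL-Analysis.Analysis"
begin

text \<open>C(X): continuous real-valued functions on the carrier of X (values outside
  the carrier fixed to undefined, so each function is determined by its graph).\<close>
definition Cfun :: "'a topology \<Rightarrow> ('a \<Rightarrow> real) set" where
  "Cfun X = {f. continuous_map X euclideanreal f \<and> f \<in> extensional (topspace X)}"

definition graph_of :: "'a topology \<Rightarrow> ('a \<Rightarrow> real) \<Rightarrow> ('a \<times> real) set" where
  "graph_of X f = {(x, f x) | x. x \<in> topspace X}"

definition graph_topology :: "'a topology \<Rightarrow> ('a \<Rightarrow> real) topology" where
  "graph_topology X = topology_generated_by
     {{f \<in> Cfun X. graph_of X f \<subseteq> G} | G. openin (prod_topology X euclideanreal) G}"

definition fine_topology :: "'a topology \<Rightarrow> ('a \<Rightarrow> real) topology" where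
  "fine_topology X = topology_generated_by
     {{g \<in> Cfun X. \<forall>x\<in>topspace X. \<bar>f x - g x\<bar> < \<eta> x} | f \<eta>.
        f \<in> Cfun X \<and> continuous_map X euclideanreal \<eta> \<and>
        (\<forall>x\<in>topspace X. 0 < \<eta> x \<and> \<eta> x < 1)}"

definition lsc_on :: "'a topology \<Rightarrow> ('a \<Rightarrow> real) \<Rightarrow> bool" where
  "lsc_on X f \<longleftrightarrow> (\<forall>t. openin X {x \<in> topspace X. t < f x})"

end

theory Submission
  imports Defs
begin

(* (a) Every fine neighbourhood is a graph neighbourhood, so the fine topology is always
       contained in the graph topology.
   (b) Conversely, an open G containing the graph of h contains a tube around h whose
       radius  tube_radius X G h  is lower semicontinuous with values in (0,1/2].  A
       continuous gauge below this radius yields a fine neighbourhood of h inside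
       graph_nbhd X G; so the minorant condition (2) makes the graph topology coarser.
   (c) If the topologies agree and eps is lsc, the tube {|y| < eps x} around 0 is open,
       hence contains some fine neighbourhood of 0 of gauge eta; testing with multiples of
       eta shows eta <= eps, which is condition (2). *)

definition gauge_on :: "'a topology \<Rightarrow> ('a \<Rightarrow> real) \<Rightarrow> bool" where
  "gauge_on X \<eta> \<longleftrightarrow>
     continuous_map X euclideanreal \<eta> \<and> (\<forall>x\<in>topspace X. 0 < \<eta> x \<and> \<eta> x < 1)"

definition fine_nbhd :: "'a topology \<Rightarrow> ('a \<Rightarrow> real) \<Rightarrow> ('a \<Rightarrow> real) \<Rightarrow> ('a \<Rightarrow> real) set" where
  "fine_nbhd X f \<eta> = {g \<in> Cfun X. \<forall>x\<in>topspace X. \<bar>f x - g x\<bar> < \<eta> x}"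

definition graph_nbhd :: "'a topology \<Rightarrow> ('a \<times> real) set \<Rightarrow> ('a \<Rightarrow> real) set" where
  "graph_nbhd X G = {f \<in> Cfun X. graph_of X f \<subseteq> G}"

lemma fine_topology_alt:
  "fine_topology X =
     topology_generated_by {fine_nbhd X f \<eta> | f \<eta>. f \<in> Cfun X \<and> gauge_on X \<eta>}"
  unfolding fine_topology_def fine_nbhd_def gauge_on_def by meson

lemma graph_topology_alt:
  "graph_topology X =
     topology_generated_by {graph_nbhd X G | G. openin (prod_topology X euclideanreal) G}"
  unfolding graph_topology_def graph_nbhd_def ..

lemma fine_nbhd_openin_fine:
  assumes "f \<in> Cfun X" "gauge_on X \<eta>"
  shows "openin (fine_topology X) (fine_nbhd X f \<eta>)"
  unfolding fine_topology_alt by (rule topology_generated_by_Basis) (use assms in blast)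

lemma graph_nbhd_openin_graph:
  assumes "openin (prod_topology X euclideanreal) G"
  shows "openin (graph_topology X) (graph_nbhd X G)"
  unfolding graph_topology_alt by (rule topology_generated_by_Basis) (use assms in blast)

lemma openin_generated_by_coarsest:
  assumes "\<And>s. s \<in> S \<Longrightarrow> openin T s"
    and "openin (topology_generated_by S) U"
  shows "openin T U"
  using generate_topology_on_coarsest[of "openin T" S U] assms
  by (simp add: openin_topology_generated_by_iff)

text \<open>Fine neighbourhoods with a common centre are closed under finite intersection
  (take the minimum of the gauges) and shrink into every basic set containing their
  centre, so they form a neighbourhood base of the fine topology.\<close>
lemma openin_fine_topology_local:
  assumes "openin (fine_topology X) U" "h \<in> U"
  shows "\<exists>\<eta>. gauge_on X \<eta> \<and> fine_nbhd X h \<eta> \<subseteq> U"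
proof -
  have "generate_topology_on {fine_nbhd X f \<eta> | f \<eta>. f \<in> Cfun X \<and> gauge_on X \<eta>} U"
    using assms(1) by (simp add: fine_topology_alt openin_topology_generated_by_iff)
  then show ?thesis using assms(2)
  proof (induction arbitrary: h)
    case Empty
    then show ?case by simp
  next
    case (Int a b)
    then obtain \<eta>1 \<eta>2 where 1: "gauge_on X \<eta>1" "fine_nbhd X h \<eta>1 \<subseteq> a"
      and 2: "gauge_on X \<eta>2" "fine_nbhd X h \<eta>2 \<subseteq> b"
      by blast
    have "gauge_on X (\<lambda>x. min (\<eta>1 x) (\<eta>2 x))"
      using 1(1) 2(1) by (auto simp: gauge_on_def intro: continuous_intros)
    moreover have "fine_nbhd X h (\<lambda>x. min (\<eta>1 x) (\<eta>2 x)) \<subseteq> a \<inter> b"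
      using 1(2) 2(2) by (auto simp: fine_nbhd_def)
    ultimately show ?case by blast
  next
    case (UN K)
    then show ?case by blast
  next
    case (Basis s)
    then obtain f \<eta> where s: "s = fine_nbhd X f \<eta>" and f: "f \<in> Cfun X"
      and \<eta>: "gauge_on X \<eta>" by blast
    have hs: "h \<in> Cfun X" "\<forall>x\<in>topspace X. \<bar>f x - h x\<bar> < \<eta> x"
      using Basis s by (auto simp: fine_nbhd_def)
    text \<open>The remaining room around h inside the basic set is itself a gauge.\<close>
    define \<eta>' where "\<eta>' = (\<lambda>x. \<eta> x - \<bar>f x - h x\<bar>)"
    have "gauge_on X \<eta>'"
      using \<eta> f hs unfolding gauge_on_def Cfun_def \<eta>'_def
      by (auto intro!: continuous_intros)
    moreover have "fine_nbhd X h \<eta>' \<subseteq> s"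
      unfolding fine_nbhd_def s \<eta>'_def by auto
    ultimately show ?case by blast
  qed
qed

lemma restrict_in_Cfun:
  assumes "continuous_map X euclideanreal f"
  shows "restrict f (topspace X) \<in> Cfun X"
  unfolding Cfun_def
  using continuous_map_eq[OF assms, of "restrict f (topspace X)"] by auto

section \<open>The fine topology is always coarser than the graph topology\<close>

text \<open>A fine neighbourhood is the graph neighbourhood of the open set
  {(x,y). |f x - y| < eta x}.\<close>
lemma fine_nbhd_openin_graph:
  assumes f: "f \<in> Cfun X" and \<eta>: "gauge_on X \<eta>"
  shows "openin (graph_topology X) (fine_nbhd X f \<eta>)"
proof -
  define G where "G = {p \<in> topspace (prod_topology X euclideanreal).
       \<eta> (fst p) - \<bar>f (fst p) - snd p\<bar> \<in> {0<..}}"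
  have "continuous_map (prod_topology X euclideanreal) euclideanreal
          (\<lambda>p. \<eta> (fst p) - \<bar>f (fst p) - snd p\<bar>)"
    using f \<eta> unfolding Cfun_def gauge_on_def
    by (intro continuous_intros continuous_map_compose[OF continuous_map_fst, unfolded o_def])
       auto
  then have "openin (prod_topology X euclideanreal) G"
    unfolding G_def by (rule openin_continuous_map_preimage) auto
  moreover have "fine_nbhd X f \<eta> = graph_nbhd X G"
    by (auto simp: fine_nbhd_def graph_nbhd_def G_def graph_of_def)
  ultimately show ?thesis by (simp add: graph_nbhd_openin_graph)
qed

lemma openin_fine_imp_openin_graph:
  assumes "openin (fine_topology X) U"
  shows "openin (graph_topology X) U"
  using assms unfolding fine_topology_alt
  by (rule openin_generated_by_coarsest[rotated]) (auto intro: fine_nbhd_openin_graph)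

section \<open>Tubes of lower semicontinuous radius\<close>

definition tube_radii :: "'a topology \<Rightarrow> ('a \<times> real) set \<Rightarrow> ('a \<Rightarrow> real) \<Rightarrow> 'a \<Rightarrow> real set" where
  "tube_radii X G h x = {r. 0 < r \<and> r \<le> 1/2 \<and>
     (\<exists>U. openin X U \<and> x \<in> U \<and> (\<forall>z\<in>U. \<forall>y. \<bar>y - h z\<bar> < r \<longrightarrow> (z, y) \<in> G))}"

text \<open>The largest such radius; it is lower semicontinuous since an admissible radius at x
  stays admissible on a whole neighbourhood of x.\<close>
definition tube_radius :: "'a topology \<Rightarrow> ('a \<times> real) set \<Rightarrow> ('a \<Rightarrow> real) \<Rightarrow> 'a \<Rightarrow> real" where
  "tube_radius X G h x = Sup (tube_radii X G h x)"

lemma bdd_above_tube_radii: "bdd_above (tube_radii X G h x)"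
  unfolding tube_radii_def by (auto intro: bdd_aboveI[of _ "1/2"])

lemma tube_radii_nonempty:
  assumes G: "openin (prod_topology X euclideanreal) G"
    and h: "continuous_map X euclideanreal h" and hG: "graph_of X h \<subseteq> G"
    and x: "x \<in> topspace X"
  shows "tube_radii X G h x \<noteq> {}"
proof -
  have "(x, h x) \<in> G" using hG x by (auto simp: graph_of_def)
  then obtain U V where U: "openin X U" and V: "open V" and "x \<in> U" "h x \<in> V"
    and UV: "U \<times> V \<subseteq> G"
    using G unfolding openin_prod_topology_alt by (metis open_openin)
  then obtain e where e: "e > 0" "ball (h x) e \<subseteq> V" using openE by blast
  define U' where "U' = U \<inter> {z \<in> topspace X. h z \<in> ball (h x) (e/2)}"
  have "openin X U'"
    unfolding U'_def by (intro openin_Int U openin_continuous_map_preimage[OF h]) auto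
  moreover have "x \<in> U'" using \<open>x \<in> U\<close> x e by (auto simp: U'_def)
  moreover have "(z, y) \<in> G" if "z \<in> U'" "\<bar>y - h z\<bar> < min (e/2) (1/2)" for z y
  proof -
    have "dist (h x) (h z) < e/2" using that(1) by (simp add: U'_def)
    moreover have "dist y (h z) < e/2" using that(2) by (simp add: dist_real_def)
    ultimately have "y \<in> ball (h x) e" using dist_triangle2[of "h x" y "h z"] by simp
    then show ?thesis using e UV that(1) by (auto simp: U'_def)
  qed
  ultimately have "min (e/2) (1/2) \<in> tube_radii X G h x"
    using e unfolding tube_radii_def by auto
  then show ?thesis by blast
qed

lemma tube_radius_bounds:
  assumes "openin (prod_topology X euclideanreal) G"
    and "continuous_map X euclideanreal h" "graph_of X h \<subseteq> G" "x \<in> topspace X"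
  shows "0 < tube_radius X G h x \<and> tube_radius X G h x < 1"
proof -
  have ne: "tube_radii X G h x \<noteq> {}" using tube_radii_nonempty assms .
  then obtain r where r: "r \<in> tube_radii X G h x" by blast
  have "r \<le> tube_radius X G h x"
    unfolding tube_radius_def using r bdd_above_tube_radii by (rule cSup_upper)
  moreover have "tube_radius X G h x \<le> 1/2"
    unfolding tube_radius_def using ne by (rule cSup_least) (auto simp: tube_radii_def)
  moreover have "0 < r" using r by (simp add: tube_radii_def)
  ultimately show ?thesis by linarith
qed

lemma lsc_tube_radius:
  assumes "openin (prod_topology X euclideanreal) G"
    and "continuous_map X euclideanreal h" "graph_of X h \<subseteq> G"
  shows "lsc_on X (tube_radius X G h)"
  unfolding lsc_on_def
proof
  fix t
  show "openin X {x \<in> topspace X. t < tube_radius X G h x}"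
  proof (subst openin_subopen, intro ballI)
    fix x assume "x \<in> {x \<in> topspace X. t < tube_radius X G h x}"
    then have x: "x \<in> topspace X" and "t < tube_radius X G h x" by auto
    then obtain r where r: "r \<in> tube_radii X G h x" "t < r"
      using less_cSup_iff[OF tube_radii_nonempty[OF assms x] bdd_above_tube_radii]
      unfolding tube_radius_def by blast
    then obtain U where U: "openin X U" "x \<in> U"
      and fits: "\<forall>z\<in>U. \<forall>y. \<bar>y - h z\<bar> < r \<longrightarrow> (z, y) \<in> G"
      unfolding tube_radii_def by blast
    have "t < tube_radius X G h z" if z: "z \<in> U" for z
    proof -
      have "r \<in> tube_radii X G h z" using U fits r z unfolding tube_radii_def by blast
      then have "r \<le> tube_radius X G h z"
        unfolding tube_radius_def using bdd_above_tube_radii by (rule cSup_upper)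
      then show ?thesis using r(2) by linarith
    qed
    then show "\<exists>T. openin X T \<and> x \<in> T \<and> T \<subseteq> {x \<in> topspace X. t < tube_radius X G h x}"
      using U openin_subset[OF U(1)] by blast
  qed
qed

lemma tube_radius_fits:
  assumes "openin (prod_topology X euclideanreal) G"
    and "continuous_map X euclideanreal h" "graph_of X h \<subseteq> G"
    and z: "z \<in> topspace X" and y: "\<bar>y - h z\<bar> < tube_radius X G h z"
  shows "(z, y) \<in> G"
proof -
  obtain r where r: "r \<in> tube_radii X G h z" "\<bar>y - h z\<bar> < r"
    using y less_cSup_iff[OF tube_radii_nonempty[OF assms(1-3) z] bdd_above_tube_radii]
    unfolding tube_radius_def by blast
  then show ?thesis unfolding tube_radii_def by blast
qed

definition continuous_minorants :: "'a topology \<Rightarrow> bool" where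
  "continuous_minorants X \<longleftrightarrow>
     (\<forall>\<epsilon>. lsc_on X \<epsilon> \<and> (\<forall>x\<in>topspace X. 0 < \<epsilon> x \<and> \<epsilon> x < 1) \<longrightarrow>
       (\<exists>\<eta>. continuous_map X euclideanreal \<eta> \<and>
            (\<forall>x\<in>topspace X. 0 < \<eta> x \<and> \<eta> x < 1 \<and> \<eta> x \<le> \<epsilon> x)))"

text \<open>Under (2), a continuous gauge below tube_radius gives a fine neighbourhood of each
  member of a graph neighbourhood inside it.\<close>
lemma graph_nbhd_openin_fine:
  assumes minorants: "continuous_minorants X"
    and G: "openin (prod_topology X euclideanreal) G"
  shows "openin (fine_topology X) (graph_nbhd X G)"
proof (subst openin_subopen, intro ballI)
  fix h assume "h \<in> graph_nbhd X G"
  then have hC: "h \<in> Cfun X" and hG: "graph_of X h \<subseteq> G" by (auto simp: graph_nbhd_def)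
  have h: "continuous_map X euclideanreal h" using hC by (simp add: Cfun_def)
  obtain \<eta> where \<eta>: "continuous_map X euclideanreal \<eta>"
    and \<eta>_bounds: "\<forall>x\<in>topspace X. 0 < \<eta> x \<and> \<eta> x < 1 \<and> \<eta> x \<le> tube_radius X G h x"
    using minorants lsc_tube_radius[OF G h hG] tube_radius_bounds[OF G h hG]
    unfolding continuous_minorants_def by meson
  have gauge: "gauge_on X \<eta>" using \<eta> \<eta>_bounds by (simp add: gauge_on_def)
  have "fine_nbhd X h \<eta> \<subseteq> graph_nbhd X G"
  proof
    fix g assume g: "g \<in> fine_nbhd X h \<eta>"
    have "(z, g z) \<in> G" if z: "z \<in> topspace X" for z
    proof (rule tube_radius_fits[OF G h hG z])
      show "\<bar>g z - h z\<bar> < tube_radius X G h z"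
        using g z \<eta>_bounds by (force simp: fine_nbhd_def)
    qed
    then show "g \<in> graph_nbhd X G"
      using g by (auto simp: fine_nbhd_def graph_nbhd_def graph_of_def)
  qed
  moreover have "h \<in> fine_nbhd X h \<eta>" using hC \<eta>_bounds by (auto simp: fine_nbhd_def)
  ultimately show "\<exists>T. openin (fine_topology X) T \<and> h \<in> T \<and> T \<subseteq> graph_nbhd X G"
    using fine_nbhd_openin_fine[OF hC gauge] by blast
qed

lemma openin_graph_imp_openin_fine:
  assumes "continuous_minorants X" "openin (graph_topology X) U"
  shows "openin (fine_topology X) U"
  using assms(2) unfolding graph_topology_alt
  by (rule openin_generated_by_coarsest[rotated]) (auto intro: graph_nbhd_openin_fine[OF assms(1)])

lemma openin_lsc_tube:
  assumes "lsc_on X \<epsilon>"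
  shows "openin (prod_topology X euclideanreal) {(x, y). x \<in> topspace X \<and> \<bar>y\<bar> < \<epsilon> x}"
  unfolding openin_prod_topology_alt
proof (intro allI impI)
  fix x y assume "(x, y) \<in> {(x, y). x \<in> topspace X \<and> \<bar>y\<bar> < \<epsilon> x}"
  then have x: "x \<in> topspace X" and y: "\<bar>y\<bar> < \<epsilon> x" by auto
  define t where "t = (\<bar>y\<bar> + \<epsilon> x) / 2"
  have "openin X {z \<in> topspace X. t < \<epsilon> z}" using assms by (simp add: lsc_on_def)
  moreover have "openin euclideanreal {-t<..<t}" by simp
  moreover have "x \<in> {z \<in> topspace X. t < \<epsilon> z}" using x y by (simp add: t_def)
  moreover have "y \<in> {-t<..<t}" using y by (auto simp: t_def abs_less_iff field_simps)
  moreover have "{z \<in> topspace X. t < \<epsilon> z} \<times> {-t<..<t} \<subseteq>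
                   {(x, y). x \<in> topspace X \<and> \<bar>y\<bar> < \<epsilon> x}"
    by auto
  ultimately show "\<exists>U V. openin X U \<and> openin euclideanreal V \<and> x \<in> U \<and> y \<in> V \<and>
                     U \<times> V \<subseteq> {(x, y). x \<in> topspace X \<and> \<bar>y\<bar> < \<epsilon> x}"
    by blast
qed

text \<open>If the eta-neighbourhood of 0 consists of functions with values below a positive eps,
  then eta <= eps: otherwise (eps x / eta x) * eta would violate this at x.\<close>
lemma gauge_le_if_fine_nbhd_zero_in_tube:
  assumes \<eta>: "gauge_on X \<eta>" and \<epsilon>: "\<forall>x\<in>topspace X. 0 < \<epsilon> x"
    and sub: "fine_nbhd X (restrict (\<lambda>_. 0) (topspace X)) \<eta> \<subseteq>
              graph_nbhd X {(x, y). x \<in> topspace X \<and> \<bar>y\<bar> < \<epsilon> x}"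
    and x: "x \<in> topspace X"
  shows "\<eta> x \<le> \<epsilon> x"
proof (rule ccontr)
  assume "\<not> \<eta> x \<le> \<epsilon> x"
  define c where "c = \<epsilon> x / \<eta> x"
  have \<eta>_pos: "\<forall>z\<in>topspace X. 0 < \<eta> z \<and> \<eta> z < 1" using \<eta> by (simp add: gauge_on_def)
  have c: "0 < c" "c < 1"
    using \<open>\<not> \<eta> x \<le> \<epsilon> x\<close> \<epsilon> \<eta>_pos x by (auto simp: c_def)
  define g where "g = restrict (\<lambda>z. c * \<eta> z) (topspace X)"
  have "g \<in> Cfun X"
    unfolding g_def using \<eta> by (intro restrict_in_Cfun continuous_intros) (simp add: gauge_on_def)
  moreover have "\<bar>0 - g z\<bar> < \<eta> z" if "z \<in> topspace X" for z
  proof -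
    have "0 < \<eta> z" using \<eta>_pos that by blast
    then have "0 < c * \<eta> z" "c * \<eta> z < \<eta> z" using c by simp_all
    then show ?thesis using that by (simp add: g_def)
  qed
  ultimately have "g \<in> fine_nbhd X (restrict (\<lambda>_. 0) (topspace X)) \<eta>"
    by (simp add: fine_nbhd_def)
  with sub x have "\<bar>g x\<bar> < \<epsilon> x" by (auto simp: graph_nbhd_def graph_of_def)
  moreover have "g x = \<epsilon> x" using x \<eta>_pos by (simp add: g_def c_def less_imp_neq[symmetric])
  ultimately show False by simp
qed

lemma continuous_minorants_if_fine_eq_graph:
  assumes eq: "fine_topology X = graph_topology X"
  shows "continuous_minorants X"
  unfolding continuous_minorants_def
proof (intro allI impI)
  fix \<epsilon> assume "lsc_on X \<epsilon> \<and> (\<forall>x\<in>topspace X. 0 < \<epsilon> x \<and> \<epsilon> x < 1)"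
  then have lsc: "lsc_on X \<epsilon>" and \<epsilon>: "\<forall>x\<in>topspace X. 0 < \<epsilon> x \<and> \<epsilon> x < 1" by auto
  define zero where "zero = restrict (\<lambda>_. 0::real) (topspace X)"
  define N where "N = graph_nbhd X {(x, y). x \<in> topspace X \<and> \<bar>y\<bar> < \<epsilon> x}"
  have "openin (fine_topology X) N"
    unfolding eq N_def by (intro graph_nbhd_openin_graph openin_lsc_tube lsc)
  moreover have "zero \<in> N"
    using restrict_in_Cfun[of X "\<lambda>_. 0"] \<epsilon>
    by (auto simp: N_def zero_def graph_nbhd_def graph_of_def)
  ultimately obtain \<eta> where \<eta>: "gauge_on X \<eta>" and sub: "fine_nbhd X zero \<eta> \<subseteq> N"
    using openin_fine_topology_local by blast
  have "\<eta> x \<le> \<epsilon> x" if "x \<in> topspace X" for x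
    using gauge_le_if_fine_nbhd_zero_in_tube[OF \<eta> _ _ that] \<epsilon> sub
    unfolding zero_def N_def by blast
  then show "\<exists>\<eta>. continuous_map X euclideanreal \<eta> \<and>
               (\<forall>x\<in>topspace X. 0 < \<eta> x \<and> \<eta> x < 1 \<and> \<eta> x \<le> \<epsilon> x)"
    using \<eta> unfolding gauge_on_def by blast
qed

theorem proposition1p2:
  fixes X :: "'a topology"
  shows "fine_topology X = graph_topology X \<longleftrightarrow>
    (\<forall>\<epsilon>. lsc_on X \<epsilon> \<and> (\<forall>x\<in>topspace X. 0 < \<epsilon> x \<and> \<epsilon> x < 1) \<longrightarrow>
       (\<exists>\<eta>. continuous_map X euclideanreal \<eta> \<and>
            (\<forall>x\<in>topspace X. 0 < \<eta> x \<and> \<eta> x < 1 \<and> \<eta> x \<le> \<epsilon> x)))"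
  unfolding continuous_minorants_def[symmetric]
proof
  assume "fine_topology X = graph_topology X"
  then show "continuous_minorants X" by (rule continuous_minorants_if_fine_eq_graph)
next
  assume "continuous_minorants X"
  then show "fine_topology X = graph_topology X"
    unfolding topology_eq
    using openin_fine_imp_openin_graph openin_graph_imp_openin_fine by blast
qed

end
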